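(* Let $\mathcal{R},\mathcal{V},\mathcal{R}',\mathcal{V}'$ be finite sets with $|\mathcal{R}|=|\mathcal{R}'|$. For any positive integer $k$ and any deterministic privacy mechanism $\Delta=(\mathcal{R},\mathcal{V},\mathcal{R}',\mathcal{V}',\Pi,\Delta)$: $\Delta$ is a $k$-anonymization if and only if $\Delta$ is a $Pk$-anonymization.
   Context: A table on $(\mathcal{R},\mathcal{V})$ is a map $\mathcal{R}\to\mathcal{V}$; $\mathcal{T}$, $\mathcal{T}'$ denote the sets of tables on $(\mathcal{R},\mathcal{V})$ and $(\mathcal{R}',\mathcal{V}')$. For sets $X,Y$, $X\to Y$ is the set of maps $X\to Y$. A privacy mechanism is $(\mathcal{R},\mathcal{V},\mathcal{R}',\mathcal{V}',\Pi,\Delta)$ with $\Pi$ uniformly distributed over bijections $\mathcal{R}\to\mathcal{R}'$ and $\Delta$ a random variable in $\mathcal{T}\to(\mathcal{R}\to\mathcal{V}')$; it is a privacy mechanism from $T$ to $T'$ (random variables on $\mathcal{T},\mathcal{T}'$) if $T,\Pi,\Delta$ are mutually independent and $\Delta(T)=T'\circ\Pi$. It is deterministic if for each $\tau\in\mathcal{T}$ there is a unique table $\hat\tau$ with $\Delta(\tau)=\hat\tau$ (with probability one). $\tau'$ is $k$-anonymous if for every $r'\in\mathcal{R}'$ there are at least $k$ elements $\hat r'\in\mathcal{R}'$ with $\tau'(\hat r')=\tau'(r')$. $(\Delta,\tau')$ is $Pk$-anonymous if for all random variables $T,T'$ such that $\Delta$ is a privacy mechanism from $T$ to $T'$ and all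 $r\in\mathcal{R}$, $r'\in\mathcal{R}'$, $\Pr[\Pi(r)=r'\mid T'=\tau']\le1/k$. Call $\tau'\in\mathcal{T}'$ attainable if some $\tau\in\mathcal{T}$ has $\Pr[\Delta(\tau)=\tau'\circ\Pi]\neq0$. $\Delta$ is a $Pk$-anonymization if $(\Delta,\tau')$ is $Pk$-anonymous for every attainable $\tau'$, and a $k$-anonymization if every attainable $\tau'$ is $k$-anonymous. *)

theory Defs
  imports "HOL-Probability.Probability"
begin

text \<open>Tables on (R,V) are functions 'r \<Rightarrow> 'v, tables on (R',V') are 'r2 \<Rightarrow> 'v2.
 Prm : 'w \<Rightarrow> ('r \<Rightarrow> 'r2) is the random bijection,
 Dl : 'w \<Rightarrow> (('r \<Rightarrow> 'v) \<Rightarrow> ('r \<Rightarrow> 'v2)) is the random map Delta.\<close>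

definition cprob :: "'w measure \<Rightarrow> 'w set \<Rightarrow> 'w set \<Rightarrow> real" where
  "cprob M A B = measure M (A \<inter> B) / measure M B"

definition mutually_indep3 ::
  "'w measure \<Rightarrow> ('w \<Rightarrow> 'a) \<Rightarrow> ('w \<Rightarrow> 'b) \<Rightarrow> ('w \<Rightarrow> 'c) \<Rightarrow> bool" where
  "mutually_indep3 M X Y Z \<longleftrightarrow>
     (\<forall>A B C. measure M {w \<in> space M. X w \<in> A \<and> Y w \<in> B \<and> Z w \<in> C}
        = measure M {w \<in> space M. X w \<in> A} * measure M {w \<in> space M. Y w \<in> B}
          * measure M {w \<in> space M. Z w \<in> C})"

definition privacy_mechanism ::
  "'w measure \<Rightarrow> ('w \<Rightarrow> 'r \<Rightarrow> 'r2) \<Rightarrow> ('w \<Rightarrow> ('r \<Rightarrow> 'v) \<Rightarrow> ('r \<Rightarrow> 'v2)) \<Rightarrow> bool" where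
  "privacy_mechanism M Prm Dl \<longleftrightarrow>
     prob_space M \<and>
     Prm \<in> M \<rightarrow>\<^sub>M count_space UNIV \<and>
     Dl \<in> M \<rightarrow>\<^sub>M count_space UNIV \<and>
     (\<forall>\<pi>::'r \<Rightarrow> 'r2. bij \<pi> \<longrightarrow>
        measure M {w \<in> space M. Prm w = \<pi>} = 1 / real (card {f::'r \<Rightarrow> 'r2. bij f}))"

definition mechanism_from ::
  "'w measure \<Rightarrow> ('w \<Rightarrow> 'r \<Rightarrow> 'r2) \<Rightarrow> ('w \<Rightarrow> ('r \<Rightarrow> 'v) \<Rightarrow> ('r \<Rightarrow> 'v2))
   \<Rightarrow> ('w \<Rightarrow> 'r \<Rightarrow> 'v) \<Rightarrow> ('w \<Rightarrow> 'r2 \<Rightarrow> 'v2) \<Rightarrow> bool" where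
  "mechanism_from M Prm Dl T T' \<longleftrightarrow>
     privacy_mechanism M Prm Dl \<and>
     T \<in> M \<rightarrow>\<^sub>M count_space UNIV \<and>
     T' \<in> M \<rightarrow>\<^sub>M count_space UNIV \<and>
     mutually_indep3 M T Prm Dl \<and>
     (AE w in M. Dl w (T w) = T' w \<circ> Prm w)"

definition deterministic_mech ::
  "'w measure \<Rightarrow> ('w \<Rightarrow> 'r \<Rightarrow> 'r2) \<Rightarrow> ('w \<Rightarrow> ('r \<Rightarrow> 'v) \<Rightarrow> ('r \<Rightarrow> 'v2)) \<Rightarrow> bool" where
  "deterministic_mech M Prm Dl \<longleftrightarrow>
     (\<forall>\<tau>. \<exists>!\<tau>h. measure M {w \<in> space M. Dl w \<tau> = \<tau>h} = 1)"

definition k_anonymous :: "nat \<Rightarrow> ('r2 \<Rightarrow> 'v2) \<Rightarrow> bool" where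
  "k_anonymous k \<tau>' \<longleftrightarrow> (\<forall>r'. card {rh. \<tau>' rh = \<tau>' r'} \<ge> k)"

definition Pk_anonymous ::
  "'w measure \<Rightarrow> ('w \<Rightarrow> 'r \<Rightarrow> 'r2) \<Rightarrow> ('w \<Rightarrow> ('r \<Rightarrow> 'v) \<Rightarrow> ('r \<Rightarrow> 'v2))
   \<Rightarrow> nat \<Rightarrow> ('r2 \<Rightarrow> 'v2) \<Rightarrow> bool" where
  "Pk_anonymous M Prm Dl k \<tau>' \<longleftrightarrow>
     (\<forall>(T::'w \<Rightarrow> 'r \<Rightarrow> 'v) (T'::'w \<Rightarrow> 'r2 \<Rightarrow> 'v2). mechanism_from M Prm Dl T T' \<longrightarrow>
        (\<forall>r r'. cprob M {w \<in> space M. Prm w r = r'} {w \<in> space M. T' w = \<tau>'} \<le> 1 / real k))"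

definition attainable ::
  "'w measure \<Rightarrow> ('w \<Rightarrow> 'r \<Rightarrow> 'r2) \<Rightarrow> ('w \<Rightarrow> ('r \<Rightarrow> 'v) \<Rightarrow> ('r \<Rightarrow> 'v2)) \<Rightarrow> ('r2 \<Rightarrow> 'v2) \<Rightarrow> bool" where
  "attainable M Prm Dl \<tau>' \<longleftrightarrow>
     (\<exists>\<tau>. measure M {w \<in> space M. Dl w \<tau> = \<tau>' \<circ> Prm w} \<noteq> 0)"

definition Pk_anonymization ::
  "'w measure \<Rightarrow> ('w \<Rightarrow> 'r \<Rightarrow> 'r2) \<Rightarrow> ('w \<Rightarrow> ('r \<Rightarrow> 'v) \<Rightarrow> ('r \<Rightarrow> 'v2)) \<Rightarrow> nat \<Rightarrow> bool" where
  "Pk_anonymization M Prm Dl k \<longleftrightarrow>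
     (\<forall>\<tau>'. attainable M Prm Dl \<tau>' \<longrightarrow> Pk_anonymous M Prm Dl k \<tau>')"

definition k_anonymization ::
  "'w measure \<Rightarrow> ('w \<Rightarrow> 'r \<Rightarrow> 'r2) \<Rightarrow> ('w \<Rightarrow> ('r \<Rightarrow> 'v) \<Rightarrow> ('r \<Rightarrow> 'v2)) \<Rightarrow> nat \<Rightarrow> bool" where
  "k_anonymization M Prm Dl k \<longleftrightarrow>
     (\<forall>\<tau>'. attainable M Prm Dl \<tau>' \<longrightarrow> k_anonymous k \<tau>')"

end

theory Submission
  imports Defs "HOL-Combinatorics.Transposition"
begin

text \<open>
  If \<open>\<Delta>(\<tau>) = \<hat>\<tau>\<close> almost surely, then for every input \<open>T\<close> the joint law of \<open>(\<Pi>, T')\<close> is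
  \<open>Pr[\<Pi> = \<pi>, T' = \<tau>'] = Pr[\<hat>T = \<tau>' \<circ> \<pi>] / N\<close>, \<open>N\<close> the number of bijections. This weight only
  depends on \<open>\<tau>' \<circ> \<pi>\<close>, so composing with the transposition of \<open>r'\<close> and any \<open>r''\<close> in the class
  \<open>C = {b. \<tau>' b = \<tau>' r'}\<close> shows that all events \<open>\<Pi> r = r''\<close>, \<open>r'' \<in> C\<close>, have the same
  probability given \<open>T' = \<tau>'\<close>; as they are disjoint and \<open>|C| \<ge> k\<close>, each has probability \<open>\<le> 1/k\<close>.

  Conversely, if \<open>\<hat>\<tau>\<^sub>0 = \<tau>' \<circ> \<pi>\<^sub>0\<close>, feed the constant input \<open>\<tau>\<^sub>0\<close>, so that \<open>T' = \<hat>\<tau>\<^sub>0 \<circ> \<Pi>\<^sup>-\<^sup>1\<close>.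
  Given \<open>T' = \<tau>'\<close>, the row \<open>\<Pi> r\<close> with \<open>r = \<pi>\<^sub>0\<^sup>-\<^sup>1 r'\<close> lies almost surely in \<open>C\<close>, so the
  conditional probabilities of \<open>\<Pi> r = r''\<close>, \<open>r'' \<in> C\<close>, sum to 1; each being \<open>\<le> 1/k\<close> forces
  \<open>|C| \<ge> k\<close>.
\<close>

lemma sets_Collect_count_space:
  assumes "X \<in> M \<rightarrow>\<^sub>M count_space UNIV"
  shows "{w \<in> space M. P (X w)} \<in> sets M"
proof -
  have "{w \<in> space M. P (X w)} = X -` {x. P x} \<inter> space M" by auto
  thus ?thesis using measurable_sets[OF assms, of "{x. P x}"] by simp
qed

lemma measurable_Pair_count_space:
  assumes "X \<in> M \<rightarrow>\<^sub>M count_space (UNIV::'a::countable set)"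
    and "Y \<in> M \<rightarrow>\<^sub>M count_space (UNIV::'b::countable set)"
  shows "(\<lambda>w. (X w, Y w)) \<in> M \<rightarrow>\<^sub>M count_space UNIV"
proof -
  have "(\<lambda>w. (X w, Y w)) \<in> M \<rightarrow>\<^sub>M count_space (UNIV::'a set) \<Otimes>\<^sub>M count_space (UNIV::'b set)"
    using assms by measurable
  thus ?thesis by (simp add: pair_measure_countable)
qed

lemma sets_Collect_count_space2:
  assumes "X \<in> M \<rightarrow>\<^sub>M count_space (UNIV::'a::countable set)"
    and "Y \<in> M \<rightarrow>\<^sub>M count_space (UNIV::'b::countable set)"
  shows "{w \<in> space M. P (X w) (Y w)} \<in> sets M"
  using sets_Collect_count_space[OF measurable_Pair_count_space[OF assms], of "case_prod P"]
  by simp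

lemma sets_mechanism_output:
  assumes "mechanism_from M Prm Dl T T'"
  shows "{w \<in> space M. T' w = \<tau>'} \<in> sets M"
  using assms sets_Collect_count_space[of T' M "\<lambda>t. t = \<tau>'"] unfolding mechanism_from_def by blast

lemma (in finite_measure) measure_Int_vimage_eq_sum:
  assumes "X \<in> M \<rightarrow>\<^sub>M count_space UNIV" "E \<in> sets M" "finite S"
  shows "measure M ({w \<in> space M. X w \<in> S} \<inter> E)
    = (\<Sum>x\<in>S. measure M ({w \<in> space M. X w = x} \<inter> E))"
proof -
  have "{w \<in> space M. X w \<in> S} \<inter> E = (\<Union>x\<in>S. {w \<in> space M. X w = x} \<inter> E)" by auto
  moreover have "measure M (\<Union>x\<in>S. {w \<in> space M. X w = x} \<inter> E)
      = (\<Sum>x\<in>S. measure M ({w \<in> space M. X w = x} \<inter> E))"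
    by (rule finite_measure_finite_Union)
      (use assms sets_Collect_count_space[OF assms(1)] in \<open>auto simp: disjoint_family_on_def\<close>)
  ultimately show ?thesis by simp
qed

lemma (in prob_space) mutually_indep3_const_AE_const:
  assumes Y: "Y \<in> M \<rightarrow>\<^sub>M count_space UNIV" and Z: "Z \<in> M \<rightarrow>\<^sub>M count_space UNIV"
    and AE_Z: "AE w in M. Z w = z"
  shows "mutually_indep3 M (\<lambda>w. c) Y Z"
  unfolding mutually_indep3_def
proof (intro allI)
  fix A B C
  have sB: "{w \<in> space M. Y w \<in> B} \<in> sets M" and sC: "{w \<in> space M. Z w \<in> C} \<in> sets M"
    and sBC: "{w \<in> space M. Y w \<in> B \<and> Z w \<in> C} \<in> sets M"
    using sets_Collect_count_space[OF Y] sets_Collect_count_space[OF Z] by auto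
  have AE_iff: "AE w in M. (Z w \<in> C) = (z \<in> C)"
    using AE_Z by eventually_elim simp
  have "measure M {w \<in> space M. Y w \<in> B \<and> Z w \<in> C}
      = measure M (if z \<in> C then {w \<in> space M. Y w \<in> B} else {})"
    by (rule finite_measure_eq_AE) (use AE_iff sBC sB in auto)
  moreover have "measure M {w \<in> space M. Z w \<in> C} = measure M (if z \<in> C then space M else {})"
    by (rule finite_measure_eq_AE) (use AE_iff sC in auto)
  ultimately show "measure M {w \<in> space M. c \<in> A \<and> Y w \<in> B \<and> Z w \<in> C}
      = measure M {w \<in> space M. c \<in> A} * measure M {w \<in> space M. Y w \<in> B}
        * measure M {w \<in> space M. Z w \<in> C}"
    by (cases "c \<in> A") (auto simp: prob_space)
qed

lemma o_bij_o_inv_cancel: "bij p \<Longrightarrow> f \<circ> p \<circ> inv p = f"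
  by (simp add: comp_assoc bij_is_surj surj_iff[THEN iffD1])

lemma comp_bij_cancel: "bij p \<Longrightarrow> f \<circ> p = g \<circ> p \<longleftrightarrow> f = g"
  by (metis o_bij_o_inv_cancel)

lemma sum_bij_at_transpose_eq:
  assumes "\<And>\<pi>. f (Transposition.transpose b b' \<circ> \<pi>) = f \<pi>"
  shows "(\<Sum>\<pi> | bij \<pi> \<and> \<pi> a = b. f \<pi>) = (\<Sum>\<pi> | bij \<pi> \<and> \<pi> a = b'. f \<pi>)"
  by (rule sum.reindex_bij_witness[of _ "\<lambda>\<pi>. Transposition.transpose b b' \<circ> \<pi>" "\<lambda>\<pi>. Transposition.transpose b b' \<circ> \<pi>"])
    (auto simp: assms bij_comp fun_eq_iff)

lemma card_mult_sum_bij_at_le: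
  fixes f :: "('a::finite \<Rightarrow> 'b::finite) \<Rightarrow> real" and g :: "'b \<Rightarrow> 'c"
  assumes nonneg: "\<And>\<pi>. f \<pi> \<ge> 0"
    and invariant: "\<And>\<pi> t. g \<circ> t = g \<Longrightarrow> f (t \<circ> \<pi>) = f \<pi>"
  shows "real (card {b'. g b' = g b}) * (\<Sum>\<pi> | bij \<pi> \<and> \<pi> a = b. f \<pi>) \<le> (\<Sum>\<pi> | bij \<pi>. f \<pi>)"
proof -
  define S where "S b' = (\<Sum>\<pi> | bij \<pi> \<and> \<pi> a = b'. f \<pi>)" for b'
  have S_eq: "S b' = S b" if "g b' = g b" for b'
    unfolding S_def
  proof (rule sum_bij_at_transpose_eq, rule invariant)
    show "g \<circ> Transposition.transpose b' b = g"
      using that by (simp add: fun_eq_iff Transposition.transpose_def)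
  qed
  have "real (card {b'. g b' = g b}) * S b = (\<Sum>b' | g b' = g b. S b')"
    using sum.cong[OF refl S_eq, of "{b'. g b' = g b}"] by simp
  also have "\<dots> \<le> (\<Sum>b'\<in>UNIV. S b')"
    by (rule sum_mono2) (simp_all add: S_def nonneg sum_nonneg)
  also have "\<dots> = (\<Sum>\<pi> | bij \<pi>. f \<pi>)"
    unfolding S_def using sum.group[of "{\<pi>::'a \<Rightarrow> 'b. bij \<pi>}" UNIV "\<lambda>\<pi>. \<pi> a" f] by simp
  finally show ?thesis unfolding S_def .
qed

locale deterministic_privacy_mechanism =
  fixes M :: "'w measure"
    and Prm :: "'w \<Rightarrow> 'r::finite \<Rightarrow> 'r2::finite"
    and Dl :: "'w \<Rightarrow> ('r \<Rightarrow> 'v::finite) \<Rightarrow> ('r \<Rightarrow> 'v2::finite)"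
  assumes card_eq: "CARD('r) = CARD('r2)"
    and privacy_mechanism: "privacy_mechanism M Prm Dl"
    and deterministic: "deterministic_mech M Prm Dl"
begin

sublocale prob_space M
  using privacy_mechanism unfolding privacy_mechanism_def by auto

lemma measurable_Prm: "Prm \<in> M \<rightarrow>\<^sub>M count_space UNIV"
  and measurable_Dl: "Dl \<in> M \<rightarrow>\<^sub>M count_space UNIV"
  and measure_Prm_eq: "bij \<pi> \<Longrightarrow> measure M {w \<in> space M. Prm w = \<pi>} = 1 / card {f::'r \<Rightarrow> 'r2. bij f}"
  using privacy_mechanism unfolding privacy_mechanism_def by auto

lemma ex_bij: "\<exists>f::'r \<Rightarrow> 'r2. bij f"
  using finite_same_card_bij[of "UNIV::'r set" "UNIV::'r2 set"] card_eq by auto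

lemma AE_bij_Prm: "AE w in M. bij (Prm w)"
proof -
  let ?Bij = "{f::'r \<Rightarrow> 'r2. bij f}"
  have "prob ({w \<in> space M. Prm w \<in> ?Bij} \<inter> space M)
      = (\<Sum>\<pi>\<in>?Bij. prob ({w \<in> space M. Prm w = \<pi>} \<inter> space M))"
    by (rule measure_Int_vimage_eq_sum[OF measurable_Prm]) simp_all
  also have "\<dots> = (\<Sum>\<pi>\<in>?Bij. 1 / card ?Bij)"
    by (rule sum.cong) (auto simp: measure_Prm_eq Int_absorb2)
  also have "\<dots> = 1" using ex_bij by (simp add: card_gt_0_iff)
  finally have "prob {w \<in> space M. bij (Prm w)} = 1" by (simp add: Int_absorb2)
  from AE_prob_1[OF this] show ?thesis by eventually_elim simp
qed

lemma measure_Int_eq_sum_bij: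
  assumes "E \<in> sets M"
  shows "prob ({w \<in> space M. P (Prm w)} \<inter> E)
    = (\<Sum>\<pi> | bij \<pi> \<and> P \<pi>. prob ({w \<in> space M. Prm w = \<pi>} \<inter> E))"
proof -
  have "prob ({w \<in> space M. P (Prm w)} \<inter> E) = prob ({w \<in> space M. Prm w \<in> {\<pi>. bij \<pi> \<and> P \<pi>}} \<inter> E)"
    by (rule finite_measure_eq_AE)
      (use AE_bij_Prm assms sets_Collect_count_space[OF measurable_Prm] in auto)
  thus ?thesis using measure_Int_vimage_eq_sum[OF measurable_Prm assms, of "{\<pi>. bij \<pi> \<and> P \<pi>}"] by simp
qed

definition Delta_hat :: "('r \<Rightarrow> 'v) \<Rightarrow> ('r \<Rightarrow> 'v2)" where
  "Delta_hat \<tau> = (THE \<tau>h. prob {w \<in> space M. Dl w \<tau> = \<tau>h} = 1)"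

lemma AE_Dl_eq_Delta_hat: "AE w in M. Dl w = Delta_hat"
proof -
  have prob_Dl_eq: "prob {w \<in> space M. Dl w \<tau> = Delta_hat \<tau>} = 1" for \<tau>
    using deterministic theI'[of "\<lambda>\<tau>h. prob {w \<in> space M. Dl w \<tau> = \<tau>h} = 1"]
    unfolding deterministic_mech_def Delta_hat_def by blast
  have "AE w in M. Dl w \<tau> = Delta_hat \<tau>" for \<tau>
    using AE_prob_1[OF prob_Dl_eq[of \<tau>]] by eventually_elim simp
  hence "AE w in M. \<forall>\<tau>\<in>UNIV. Dl w \<tau> = Delta_hat \<tau>"
    by (intro AE_finite_allI) simp_all
  thus ?thesis by (simp add: fun_eq_iff)
qed

lemma measure_Prm_T'_eq:
  assumes mech: "mechanism_from M Prm Dl T T'" and "bij \<pi>"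
  shows "prob ({w \<in> space M. Prm w = \<pi>} \<inter> {w \<in> space M. T' w = \<tau>'})
    = prob {w \<in> space M. Delta_hat (T w) = \<tau>' \<circ> \<pi>} / card {f::'r \<Rightarrow> 'r2. bij f}"
proof -
  have T: "T \<in> M \<rightarrow>\<^sub>M count_space UNIV" and T': "T' \<in> M \<rightarrow>\<^sub>M count_space UNIV"
    and indep: "mutually_indep3 M T Prm Dl" and AE_out: "AE w in M. Dl w (T w) = T' w \<circ> Prm w"
    using mech unfolding mechanism_from_def by blast+
  have AE_iff: "AE w in M. (T' w = \<tau>' \<and> Prm w = \<pi>) \<longleftrightarrow> (Delta_hat (T w) = \<tau>' \<circ> \<pi> \<and> Prm w = \<pi>)"
    using AE_out AE_Dl_eq_Delta_hat
  proof eventually_elim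
    case (elim w)
    then show ?case using comp_bij_cancel[OF \<open>bij \<pi>\<close>, of "T' w" \<tau>'] by auto
  qed
  have "prob ({w \<in> space M. Prm w = \<pi>} \<inter> {w \<in> space M. T' w = \<tau>'})
      = prob {w \<in> space M. T' w = \<tau>' \<and> Prm w = \<pi>}"
    by (rule arg_cong[where f = prob]) auto
  also have "\<dots> = prob {w \<in> space M. Delta_hat (T w) = \<tau>' \<circ> \<pi> \<and> Prm w = \<pi>}"
    using AE_iff
    by (intro finite_measure_eq_AE sets_Collect_count_space2[OF T' measurable_Prm]
        sets_Collect_count_space2[OF T measurable_Prm]) auto
  also have "\<dots> = prob {w \<in> space M. T w \<in> {\<tau>. Delta_hat \<tau> = \<tau>' \<circ> \<pi>} \<and> Prm w \<in> {\<pi>} \<and> Dl w \<in> UNIV}"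
    by (rule arg_cong[where f = prob]) auto
  also have "\<dots> = prob {w \<in> space M. Delta_hat (T w) = \<tau>' \<circ> \<pi>} * prob {w \<in> space M. Prm w = \<pi>}"
    using indep[unfolded mutually_indep3_def, rule_format, of "{\<tau>. Delta_hat \<tau> = \<tau>' \<circ> \<pi>}" "{\<pi>}" UNIV]
    by (simp add: prob_space)
  finally show ?thesis using measure_Prm_eq[OF \<open>bij \<pi>\<close>] by simp
qed

lemma k_anonymization_imp_Pk_anonymization:
  assumes k_anon: "k_anonymization M Prm Dl k" and "k > 0"
  shows "Pk_anonymization M Prm Dl k"
  unfolding Pk_anonymization_def Pk_anonymous_def
proof (intro allI impI)
  fix \<tau>' T T' r r'
  assume att: "attainable M Prm Dl \<tau>'" and mech: "mechanism_from M Prm Dl T T'"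
  define B where "B = {w \<in> space M. T' w = \<tau>'}"
  define f where "f \<pi> = prob {w \<in> space M. Delta_hat (T w) = \<tau>' \<circ> \<pi>} / card {f::'r \<Rightarrow> 'r2. bij f}"
    for \<pi>
  have B: "B \<in> sets M"
    unfolding B_def by (rule sets_mechanism_output[OF mech])
  have prob_Int_B: "prob ({w \<in> space M. P (Prm w)} \<inter> B) = (\<Sum>\<pi> | bij \<pi> \<and> P \<pi>. f \<pi>)" for P
  proof -
    have "prob ({w \<in> space M. P (Prm w)} \<inter> B)
        = (\<Sum>\<pi> | bij \<pi> \<and> P \<pi>. prob ({w \<in> space M. Prm w = \<pi>} \<inter> B))"
      by (rule measure_Int_eq_sum_bij[OF B])
    also have "\<dots> = (\<Sum>\<pi> | bij \<pi> \<and> P \<pi>. f \<pi>)"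
      unfolding B_def f_def by (rule sum.cong) (simp_all add: measure_Prm_T'_eq[OF mech])
    finally show ?thesis .
  qed
  have "\<tau>' \<circ> t = \<tau>' \<Longrightarrow> f (t \<circ> \<pi>) = f \<pi>" for t \<pi>
    unfolding f_def by (simp add: o_assoc)
  hence "real (card {b. \<tau>' b = \<tau>' r'}) * (\<Sum>\<pi> | bij \<pi> \<and> \<pi> r = r'. f \<pi>) \<le> (\<Sum>\<pi> | bij \<pi>. f \<pi>)"
    by (intro card_mult_sum_bij_at_le) (simp_all add: f_def)
  hence card_le: "real (card {b. \<tau>' b = \<tau>' r'}) * prob ({w \<in> space M. Prm w r = r'} \<inter> B) \<le> prob B"
    using prob_Int_B[of "\<lambda>\<pi>. \<pi> r = r'"] prob_Int_B[of "\<lambda>_. True"] by (simp add: sets.Int_space_eq1[OF B])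
  have "k \<le> card {b. \<tau>' b = \<tau>' r'}"
    using k_anon att unfolding k_anonymization_def k_anonymous_def by blast
  hence "real k * prob ({w \<in> space M. Prm w r = r'} \<inter> B) \<le> prob B"
    using card_le by (meson mult_right_mono measure_nonneg of_nat_mono order_trans)
  thus "cprob M {w \<in> space M. Prm w r = r'} B \<le> 1 / real k"
    unfolding cprob_def using \<open>k > 0\<close>
    by (cases "prob B = 0") (simp_all add: zero_less_measure_iff divide_simps mult.commute)
qed

lemma mechanism_from_const_input:
  "mechanism_from M Prm Dl (\<lambda>w. \<tau>) (\<lambda>w. Delta_hat \<tau> \<circ> inv (Prm w))"
  unfolding mechanism_from_def
proof (intro conjI)
  show "mutually_indep3 M (\<lambda>w. \<tau>) Prm Dl"
    by (rule mutually_indep3_const_AE_const[OF measurable_Prm measurable_Dl AE_Dl_eq_Delta_hat])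
  show "AE w in M. Dl w \<tau> = Delta_hat \<tau> \<circ> inv (Prm w) \<circ> Prm w"
    using AE_Dl_eq_Delta_hat AE_bij_Prm by eventually_elim (simp add: o_assoc bij_is_inj)
  show "(\<lambda>w. Delta_hat \<tau> \<circ> inv (Prm w)) \<in> M \<rightarrow>\<^sub>M count_space UNIV"
    using measurable_compose[OF measurable_Prm measurable_count_space[of "\<lambda>p. Delta_hat \<tau> \<circ> inv p"]]
    by simp
qed (simp_all add: privacy_mechanism)

lemma attainableE:
  assumes "attainable M Prm Dl \<tau>'"
  obtains \<tau>0 \<pi>0 where "bij \<pi>0" "Delta_hat \<tau>0 = \<tau>' \<circ> \<pi>0"
    and "prob {w \<in> space M. Delta_hat \<tau>0 \<circ> inv (Prm w) = \<tau>'} > 0"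
proof -
  obtain \<tau>0 where attained: "prob {w \<in> space M. Dl w \<tau>0 = \<tau>' \<circ> Prm w} \<noteq> 0"
    using assms unfolding attainable_def by blast
  define D where "D = {w \<in> space M. Delta_hat \<tau>0 = \<tau>' \<circ> Prm w \<and> bij (Prm w)}"
  have D: "D \<in> sets M"
    unfolding D_def by (rule sets_Collect_count_space[OF measurable_Prm])
  have "AE w in M. w \<in> {w \<in> space M. Dl w \<tau>0 = \<tau>' \<circ> Prm w} \<longrightarrow> w \<in> D"
    using AE_Dl_eq_Delta_hat AE_bij_Prm by eventually_elim (auto simp: D_def)
  then have "prob {w \<in> space M. Dl w \<tau>0 = \<tau>' \<circ> Prm w} \<le> prob D"
    by (rule finite_measure_mono_AE[OF _ D])
  with attained have D_pos: "prob D > 0"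
    using measure_nonneg[of M "{w \<in> space M. Dl w \<tau>0 = \<tau>' \<circ> Prm w}"] by linarith
  then obtain w0 where "w0 \<in> D"
    by (metis all_not_in_conv measure_empty less_irrefl)
  moreover have "D \<subseteq> {w \<in> space M. Delta_hat \<tau>0 \<circ> inv (Prm w) = \<tau>'}"
    by (auto simp: D_def o_bij_o_inv_cancel)
  with D_pos have "prob {w \<in> space M. Delta_hat \<tau>0 \<circ> inv (Prm w) = \<tau>'} > 0"
    using finite_measure_mono[OF _ sets_Collect_count_space[OF measurable_Prm]] by (meson less_le_trans)
  ultimately show ?thesis
    using that[of "Prm w0" \<tau>0] unfolding D_def by auto
qed

lemma Pk_anonymization_imp_k_anonymization:
  assumes Pk_anon: "Pk_anonymization M Prm Dl k" and "k > 0"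
  shows "k_anonymization M Prm Dl k"
  unfolding k_anonymization_def k_anonymous_def
proof (intro allI impI)
  fix \<tau>' r'
  assume att: "attainable M Prm Dl \<tau>'"
  then obtain \<tau>0 \<pi>0 where "bij \<pi>0" and \<pi>0: "Delta_hat \<tau>0 = \<tau>' \<circ> \<pi>0"
    and B_pos: "prob {w \<in> space M. Delta_hat \<tau>0 \<circ> inv (Prm w) = \<tau>'} > 0"
    by (rule attainableE)
  define T' where "T' w = Delta_hat \<tau>0 \<circ> inv (Prm w)" for w
  define B where "B = {w \<in> space M. T' w = \<tau>'}"
  define C where "C = {b. \<tau>' b = \<tau>' r'}"
  define r where "r = inv \<pi>0 r'"
  have mech: "mechanism_from M Prm Dl (\<lambda>w. \<tau>0) T'"
    unfolding T'_def by (rule mechanism_from_const_input)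
  have B: "B \<in> sets M"
    unfolding B_def by (rule sets_mechanism_output[OF mech])
  have "Delta_hat \<tau>0 r = \<tau>' r'"
    unfolding \<pi>0 r_def using \<open>bij \<pi>0\<close> by (simp add: bij_is_surj surj_f_inv_f)
  have "AE w in M. w \<in> B \<longleftrightarrow> w \<in> {w \<in> space M. Prm w r \<in> C} \<inter> B"
    using AE_bij_Prm
    by eventually_elim (auto simp: B_def T'_def C_def bij_is_inj \<open>Delta_hat \<tau>0 r = \<tau>' r'\<close>)
  then have "prob B = prob ({w \<in> space M. Prm w r \<in> C} \<inter> B)"
    by (intro finite_measure_eq_AE B sets.Int sets_Collect_count_space[OF measurable_Prm])
  also have "\<dots> = (\<Sum>r''\<in>C. prob ({w \<in> space M. Prm w r = r''} \<inter> B))"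
    by (rule measure_Int_vimage_eq_sum
        [OF measurable_compose[OF measurable_Prm measurable_count_space[of "\<lambda>p. p r"]] B]) simp
  also have "\<dots> \<le> (\<Sum>r''\<in>C. prob B / k)"
  proof (rule sum_mono)
    fix r''
    have "cprob M {w \<in> space M. Prm w r = r''} B \<le> 1 / k"
      using Pk_anon att mech unfolding Pk_anonymization_def Pk_anonymous_def B_def by blast
    with B_pos \<open>k > 0\<close> show "prob ({w \<in> space M. Prm w r = r''} \<inter> B) \<le> prob B / k"
      unfolding cprob_def B_def T'_def by (simp add: divide_simps mult.commute)
  qed
  also have "\<dots> = card C * prob B / k"
    by simp
  finally show "k \<le> card {b. \<tau>' b = \<tau>' r'}"
    using B_pos \<open>k > 0\<close> unfolding C_def B_def T'_def by (simp add: divide_simps)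
qed

end

theorem corollary3:
  fixes M :: "'w measure"
    and Prm :: "'w \<Rightarrow> 'r::finite \<Rightarrow> 'r2::finite"
    and Dl :: "'w \<Rightarrow> ('r \<Rightarrow> 'v::finite) \<Rightarrow> ('r \<Rightarrow> 'v2::finite)"
    and k :: nat
  assumes "CARD('r) = CARD('r2)"
    and "k > 0"
    and "privacy_mechanism M Prm Dl"
    and "deterministic_mech M Prm Dl"
  shows "k_anonymization M Prm Dl k \<longleftrightarrow> Pk_anonymization M Prm Dl k"
proof -
  interpret deterministic_privacy_mechanism M Prm Dl
    using assms by unfold_locales
  show ?thesis
    using k_anonymization_imp_Pk_anonymization Pk_anonymization_imp_k_anonymization \<open>k > 0\<close>
    by blast
qed

end
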